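(* Let $m \geq 2$ and $1 \leq k \leq m-1$ be integers. For indeterminates $x, s$, write $$1 - xz + s z^m = \prod_{j=1}^{m} \bigl(1 - u_j z\bigr)$$ with $u_1,\dots,u_m$ in an algebraic closure of $\mathbb{Q}(x,s)$, and define $$c(m,k,x,s,z) = \prod_{1 \leq i_1 < i_2 < \cdots < i_k \leq m} \bigl(z - u_{i_1} u_{i_2} \cdots u_{i_k}\bigr),$$ a polynomial in $z$ of degree $\binom{m}{k}$ with coefficients in $\mathbb{Z}[x,s]$. After the substitution $(x,s) \mapsto (x+1,x)$ we have $$1 - (x+1)z + x z^m = (1-z)\prod_{j=2}^{m}(1 - v_j z),$$ with $v_2,\dots,v_m$ in an algebraic closure of $\mathbb{Q}(x)$. Define $$w_{k-1}(m,x,z) = \prod_{2 \leq i_1 < \cdots < i_{k-1} \leq m} \bigl(z - v_{i_1}\cdots v_{i_{k-1}}\bigr), \qquad w_k(m,x,z) = \prod_{2 \leq i_1 < \cdots < i_{k} \leq m} \bigl(z - v_{i_1}\cdots v_{i_{k}}\bigr),$$ where for $k=1$ the empty product of the $v$'s equals $1$, so that $w_0(m,x,z) = z - 1$. Then $$c(m,k,x+1,x,z) = w_{k-1}(m,x,z)\, w_k(m,x,z),$$ and both $w_{k-1}(m,x,z)$ and $w_k(m,x,z)$ are polynomials with integer coefficients, i.e. they lie in $\mathbb{Z}[x,z]$.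
   Context: The polynomial $c(m,k,x,s,z)$ is the characteristic polynomial of the linear recurrence satisfied (in $n$) by the sequence $p_k(n,m,x,s) = (-1)^{k+1}\sum_{1 \leq i_1 < \cdots < i_k \leq m} (u_{i_1}\cdots u_{i_k})^n$, $n \geq 1$. In the factorization after the substitution $(x,s)\mapsto(x+1,x)$, one root of $1-(x+1)z+xz^m$ (in the sense of the factors $1-u_jz$) equals $1$, since $1-(x+1)z+xz^m=(1-z)\bigl(1 - xz\,\tfrac{1-z^{m-1}}{1-z}\bigr)$; the $v_j$ are the remaining $m-1$ such roots. *)

theory Defs
  imports "HOL-Computational_Algebra.Polynomial" "HOL-Computational_Algebra.Fraction_Field"
          "HOL-Algebra.Algebraic_Closure_Type"
begin

(* Z[x,s] is represented as int poly poly: the OUTER variable is x, the coefficients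
   are int polynomials in s.  So x = [:0,1:] and s = [:[:0,1:]:]. *)
type_synonym Kxs = "int poly poly fract alg_closure"
type_synonym Kx = "int poly fract alg_closure"

definition embxs :: "int poly poly \<Rightarrow> Kxs" where
  "embxs p = to_ac (Fract p 1)"

definition embx :: "int poly \<Rightarrow> Kx" where
  "embx p = to_ac (Fract p 1)"

definition ksubsets :: "nat set \<Rightarrow> nat \<Rightarrow> nat set set" where
  "ksubsets A k = {I. I \<subseteq> A \<and> card I = k}"

(* c(m,k,x,s,z): the polynomial in z (outermost) with coefficients in Z[x,s] whose
   image in Kxs[z] is prod_{I, |I|=k} (z - prod_{i in I} u_i), where
   1 - x z + s z^m = prod_{j=1}^m (1 - u_j z) in Kxs[z]. *)
definition c_poly :: "nat \<Rightarrow> nat \<Rightarrow> int poly poly poly" where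
  "c_poly m k = (THE P. \<forall>u :: nat \<Rightarrow> Kxs.
      ([:1:] - [:0, embxs [:0, 1:]:] + monom (embxs [:[:0, 1:]:]) m
         = (\<Prod>j\<in>{1..m}. [:1, - u j:]))
      \<longrightarrow> map_poly embxs P = (\<Prod>I\<in>ksubsets {1..m} k. [:- (\<Prod>i\<in>I. u i), 1:]))"

(* substitution (x,s) |-> (x+1,x) on Z[x,s] -> Z[x] *)
definition subst_xs :: "int poly poly \<Rightarrow> int poly" where
  "subst_xs p = poly p [:1, 1:]"

end

theory Submission
  imports Defs "Subresultants.More_Homomorphisms" "HOL-Library.Poly_Mapping"
begin

text \<open>
  The coefficients of the product of (1 - u_I z) over the k-subsets I are symmetric in the u_j, so
  they are integer polynomials, independent of the ring, in the coefficients of the product of the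
  (1 - u_j z). These universal polynomials are built by induction on the number of variables:
  singling out X_j splits the product into two products over the remaining variables, which yields
  one polynomial in an auxiliary variable T whose value at each of the roots T = X_j of the monic
  polynomial prod (T - X_j) is the wanted coefficient; division by that polynomial shows the
  coefficient lies in the ring generated by the coefficients of prod (1 - X_j z).

  Hence c(m,k) is a universal polynomial evaluated at the coefficients of 1 - xz + sz^m, which
  commutes with the substitution (x,s) -> (x+1,x). Afterwards one of the u_j equals 1, and the
  k-subsets containing it give w_(k-1), the others w_k; both are again universal polynomials,
  evaluated at the integer coefficients of 1 - xz - ... - xz^(m-1).
\<close>

section \<open>Subsets of a fixed size\<close>

lemma finite_ksubsets: "finite A \<Longrightarrow> finite (ksubsets A k)"
  unfolding ksubsets_def by (rule finite_subset[of _ "Pow A"]) auto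

lemma card_ksubsets: "finite A \<Longrightarrow> card (ksubsets A k) = card A choose k"
  unfolding ksubsets_def by (rule n_subsets)

lemma ksubsets_0: "finite A \<Longrightarrow> ksubsets A 0 = {{}}"
  unfolding ksubsets_def by (auto dest: finite_subset)

lemma ksubsets_empty_Suc: "ksubsets {} (Suc k) = {}"
  by (auto simp: ksubsets_def)

lemma ksubsets_insert:
  assumes "a \<notin> A" "finite A"
  shows "ksubsets (insert a A) (Suc k) = ksubsets A (Suc k) \<union> insert a ` ksubsets A k"
proof (intro equalityI subsetI)
  fix I assume "I \<in> ksubsets (insert a A) (Suc k)"
  then have I: "I \<subseteq> insert a A" "card I = Suc k" and "finite I"
    using assms by (auto simp: ksubsets_def intro: finite_subset)
  show "I \<in> ksubsets A (Suc k) \<union> insert a ` ksubsets A k"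
  proof (cases "a \<in> I")
    case True
    then have "I = insert a (I - {a})" "I - {a} \<in> ksubsets A k"
      using I \<open>finite I\<close> by (auto simp: ksubsets_def)
    then show ?thesis by blast
  qed (use I in \<open>auto simp: ksubsets_def\<close>)
qed (use assms in \<open>auto simp: ksubsets_def intro!: card_insert_disjoint dest: finite_subset\<close>)

lemma prod_ksubsets_insert:
  assumes "a \<notin> A" "finite A"
  shows "(\<Prod>I\<in>ksubsets (insert a A) (Suc k). f I)
       = (\<Prod>I\<in>ksubsets A (Suc k). f I) * (\<Prod>J\<in>ksubsets A k. f (insert a J))"
proof -
  have "inj_on (insert a) (ksubsets A k)"
    using assms(1) unfolding ksubsets_def
    by (intro inj_onI) (metis Diff_insert_absorb mem_Collect_eq subsetD)
  moreover have "ksubsets A (Suc k) \<inter> insert a ` ksubsets A k = {}"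
    using assms(1) by (auto simp: ksubsets_def)
  ultimately show ?thesis
    unfolding ksubsets_insert[OF assms]
    by (simp add: prod.union_disjoint finite_ksubsets assms(2) prod.reindex)
qed

lemma prod_ksubsets_reindex:
  assumes "bij_betw h B A"
  shows "(\<Prod>I\<in>ksubsets A k. f (\<Prod>i\<in>I. u i)) = (\<Prod>I\<in>ksubsets B k. f (\<Prod>i\<in>I. u (h i)))"
proof -
  have inj: "inj_on h I" if "I \<subseteq> B" for I
    using assms that by (meson bij_betw_def inj_on_subset)
  have "bij_betw (image h) (ksubsets B k) (ksubsets A k)"
  proof (rule bij_betw_subset[OF bij_betw_image_Pow[OF assms]])
    show "ksubsets B k \<subseteq> Pow B" by (auto simp: ksubsets_def)
    show "image h ` ksubsets B k = ksubsets A k"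
    proof (intro equalityI subsetI)
      fix J assume "J \<in> ksubsets A k"
      then have "J \<in> image h ` Pow B"
        using bij_betw_image_Pow[OF assms] by (auto simp: ksubsets_def bij_betw_def)
      then obtain I where "I \<subseteq> B" "J = h ` I" by blast
      then show "J \<in> image h ` ksubsets B k"
        using \<open>J \<in> ksubsets A k\<close> inj by (auto simp: ksubsets_def card_image)
    qed (use assms inj in \<open>auto simp: ksubsets_def card_image bij_betw_def\<close>)
  qed
  then show ?thesis
    by (simp add: prod.reindex_bij_betw[symmetric] prod.reindex inj ksubsets_def)
qed

section \<open>Products over k-subsets\<close>

definition recip_poly :: "nat set \<Rightarrow> (nat \<Rightarrow> 'a::comm_ring_1) \<Rightarrow> 'a poly" where
  "recip_poly A u = (\<Prod>j\<in>A. [:1, - u j:])"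

definition ksubset_recip_poly :: "nat set \<Rightarrow> nat \<Rightarrow> (nat \<Rightarrow> 'a::comm_ring_1) \<Rightarrow> 'a poly" where
  "ksubset_recip_poly A k u = (\<Prod>I\<in>ksubsets A k. [:1, - (\<Prod>i\<in>I. u i):])"

definition ksubset_poly :: "nat set \<Rightarrow> nat \<Rightarrow> (nat \<Rightarrow> 'a::comm_ring_1) \<Rightarrow> 'a poly" where
  "ksubset_poly A k u = (\<Prod>I\<in>ksubsets A k. [:- (\<Prod>i\<in>I. u i), 1:])"

lemma prod_insert_ksubset:
  "a \<notin> A \<Longrightarrow> J \<in> ksubsets A k \<Longrightarrow> finite A \<Longrightarrow> (\<Prod>i\<in>insert a J. u i) = u a * (\<Prod>i\<in>J. u i)"
  by (subst prod.insert) (auto simp: ksubsets_def dest: finite_subset)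

lemma ksubset_recip_poly_insert:
  assumes "a \<notin> A" "finite A"
  shows "ksubset_recip_poly (insert a A) (Suc k) u
       = ksubset_recip_poly A (Suc k) u * (ksubset_recip_poly A k u \<circ>\<^sub>p [:0, u a:])"
proof -
  have lin: "[:1, - c:] \<circ>\<^sub>p [:0, t:] = [:1, - (t * c):]" for c t :: 'a
    by (rule poly_eqI) (simp add: pcompose_pCons coeff_pCons split: nat.split)
  have "(\<Prod>J\<in>ksubsets A k. [:1, - (\<Prod>i\<in>insert a J. u i):]) = ksubset_recip_poly A k u \<circ>\<^sub>p [:0, u a:]"
    unfolding ksubset_recip_poly_def pcompose_prod lin
    by (rule prod.cong) (simp_all only: prod_insert_ksubset[OF assms(1) _ assms(2)])
  then show ?thesis
    unfolding ksubset_recip_poly_def by (simp only: prod_ksubsets_insert[OF assms])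
qed

lemma ksubset_poly_insert_one:
  assumes "a \<notin> A" "finite A" "u a = 1"
  shows "ksubset_poly (insert a A) (Suc k) u = ksubset_poly A (Suc k) u * ksubset_poly A k u"
proof -
  have "(\<Prod>J\<in>ksubsets A k. [:- (\<Prod>i\<in>insert a J. u i), 1:]) = ksubset_poly A k u"
    unfolding ksubset_poly_def
    by (rule prod.cong) (simp_all only: prod_insert_ksubset[OF assms(1) _ assms(2)] assms(3) mult_1)
  then show ?thesis
    unfolding ksubset_poly_def by (simp only: prod_ksubsets_insert[OF assms(1,2)])
qed

lemma ksubset_poly_cong: "(\<And>i. i \<in> A \<Longrightarrow> u i = u' i) \<Longrightarrow> ksubset_poly A k u = ksubset_poly A k u'"
  unfolding ksubset_poly_def ksubsets_def
  by (intro prod.cong refl arg_cong2[where f=pCons] arg_cong[where f=uminus]) auto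

lemma ksubset_recip_poly_0: "finite A \<Longrightarrow> ksubset_recip_poly A 0 u = [:1, -1:]"
  by (simp add: ksubset_recip_poly_def ksubsets_0)

lemma ksubset_recip_poly_empty_Suc: "ksubset_recip_poly {} (Suc k) u = 1"
  by (simp add: ksubset_recip_poly_def ksubsets_empty_Suc)

lemma recip_poly_reindex: "bij_betw h B A \<Longrightarrow> recip_poly A u = recip_poly B (u \<circ> h)"
  unfolding recip_poly_def by (simp add: prod.reindex_bij_betw[symmetric])

lemma ksubset_recip_poly_reindex:
  "bij_betw h B A \<Longrightarrow> ksubset_recip_poly A k u = ksubset_recip_poly B k (u \<circ> h)"
  unfolding ksubset_recip_poly_def comp_def by (rule prod_ksubsets_reindex)

context comm_ring_hom
begin

interpretation map_poly_hom: map_poly_comm_ring_hom hom ..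

lemma map_poly_recip_poly: "map_poly hom (recip_poly A u) = recip_poly A (hom \<circ> u)"
  by (simp add: recip_poly_def map_poly_hom.hom_prod map_poly_pCons_hom hom_uminus)

lemma map_poly_ksubset_recip_poly:
  "map_poly hom (ksubset_recip_poly A k u) = ksubset_recip_poly A k (hom \<circ> u)"
  by (simp add: ksubset_recip_poly_def map_poly_hom.hom_prod map_poly_pCons_hom hom_uminus hom_prod)

end

definition rev_poly :: "nat \<Rightarrow> 'a::comm_monoid_add poly \<Rightarrow> 'a poly" where
  "rev_poly N p = (\<Sum>i\<le>N. monom (coeff p (N - i)) i)"

lemma coeff_rev_poly: "coeff (rev_poly N p) j = (if j \<le> N then coeff p (N - j) else 0)"
  unfolding rev_poly_def coeff_sum coeff_monom by (auto simp: sum.delta)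

lemma (in comm_ring_hom) map_poly_rev_poly:
  "map_poly hom (rev_poly N p) = rev_poly N (map_poly hom p)"
  by (intro poly_eqI) (simp add: coeff_rev_poly)

lemma reflect_poly_monic_linear: "reflect_poly [:- c, 1:] = [:1, - c :: 'a::comm_ring_1:]"
  by (simp add: reflect_poly_def cCons_def)

lemma prod_monic_linear_eq_rev_poly:
  fixes c :: "'b \<Rightarrow> 'a::idom"
  assumes "finite T"
  shows "(\<Prod>t\<in>T. [:- c t, 1:]) = rev_poly (card T) (\<Prod>t\<in>T. [:1, - c t:])"
proof (rule poly_eqI)
  fix j
  let ?p = "\<Prod>t\<in>T. [:- c t, 1:]"
  have "(\<Prod>t\<in>T. [:1, - c t:]) = reflect_poly ?p"
    by (simp add: reflect_poly_prod reflect_poly_monic_linear[simplified])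
  moreover have "degree ?p = card T"
    by (subst degree_prod_sum_eq) auto
  ultimately show "coeff ?p j = coeff (rev_poly (card T) (\<Prod>t\<in>T. [:1, - c t:])) j"
    by (auto simp: coeff_rev_poly coeff_reflect_poly coeff_eq_0)
qed

lemma ksubset_poly_eq_rev_poly:
  "finite A \<Longrightarrow>
    ksubset_poly A k (u :: nat \<Rightarrow> 'a::idom) = rev_poly (card A choose k) (ksubset_recip_poly A k u)"
  unfolding ksubset_poly_def ksubset_recip_poly_def card_ksubsets[symmetric]
  by (rule prod_monic_linear_eq_rev_poly[OF finite_ksubsets])

section \<open>Values of image polynomials\<close>

lemma comm_ring_hom_comp:
  assumes "comm_ring_hom f" "comm_ring_hom g"
  shows "comm_ring_hom (g \<circ> f)"
proof -
  interpret f: comm_ring_hom f by fact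
  interpret g: comm_ring_hom g by fact
  show ?thesis
    by unfold_locales (simp_all add: f.hom_add f.hom_mult g.hom_add g.hom_mult)
qed

lemma (in comm_ring_hom) comm_ring_hom_map_poly: "comm_ring_hom (map_poly hom)"
proof -
  interpret map_poly_hom: map_poly_comm_ring_hom hom ..
  show ?thesis ..
qed

lemma poly_eq_const_if_eq_on_points:
  fixes R :: "'a::idom poly"
  assumes "degree R < n" "inj_on x {..<n}" "\<And>j. j < n \<Longrightarrow> poly R (x j) = c"
  shows "R = [:c:]"
proof (rule ccontr)
  assume "R \<noteq> [:c:]"
  then have nz: "R - [:c:] \<noteq> 0" by simp
  have "n = card (x ` {..<n})" using assms(2) by (simp add: card_image)
  also have "\<dots> \<le> card {y. poly (R - [:c:]) y = 0}"
    using assms(3) by (intro card_mono[OF poly_roots_finite[OF nz]]) auto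
  also have "\<dots> \<le> degree (R - [:c:])" by (rule card_poly_roots_bound[OF nz])
  also have "\<dots> < n" using assms(1) degree_diff_le_max[of R "[:c:]"] by simp
  finally show False by simp
qed

lemma (in comm_ring_hom) ex_monic_preimage:
  assumes "lead_coeff F = 1" "\<And>l. coeff F l \<in> range hom"
  shows "\<exists>F'. map_poly hom F' = F \<and> lead_coeff F' = 1 \<and> degree F' = degree F"
proof -
  define g where "g l = inv_into UNIV hom (coeff F l)" for l
  have g: "hom (g l) = coeff F l" for l
    unfolding g_def by (rule f_inv_into_f[OF assms(2)])
  define F' where "F' = monom 1 (degree F) + (\<Sum>l<degree F. monom (g l) l)"
  have coeff_F': "coeff F' l = (if l = degree F then 1 else if l < degree F then g l else 0)" for l
    by (auto simp: F'_def coeff_sum coeff_monom)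
  have "map_poly hom F' = F"
    using assms(1) by (intro poly_eqI) (auto simp: coeff_F' g coeff_eq_0)
  moreover have "degree F' = degree F"
    by (intro antisym degree_le le_degree) (auto simp: coeff_F')
  ultimately show ?thesis
    by (auto simp: coeff_F')
qed

text \<open>Divide by a monic preimage of the root polynomial and evaluate the remainder at the roots.\<close>

lemma value_in_range_comm_ring_hom:
  fixes h :: "'a::comm_ring_1 \<Rightarrow> 'b::idom" and x :: "nat \<Rightarrow> 'b"
  assumes hom: "comm_ring_hom h" and "0 < N" "inj_on x {..<N}"
    and coeffs: "\<And>l. coeff (\<Prod>j<N. [:- x j, 1:]) l \<in> range h"
    and at_roots: "\<And>j. j < N \<Longrightarrow> poly (map_poly h Q) (x j) = c"
  shows "c \<in> range h"
proof -
  interpret comm_ring_hom h by (fact hom)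
  interpret map_poly_hom: map_poly_comm_ring_hom h ..
  let ?F = "\<Prod>j<N. [:- x j, 1:]"
  have "degree ?F = N" by (subst degree_prod_sum_eq) auto
  moreover have "lead_coeff ?F = 1" by (simp add: lead_coeff_prod)
  ultimately obtain F' where F': "map_poly h F' = ?F" "lead_coeff F' = 1" "degree F' = N"
    using ex_monic_preimage coeffs by metis
  obtain q r where qr: "pseudo_divmod Q F' = (q, r)" by (metis surj_pair)
  have "F' \<noteq> 0" using F'(2) by auto
  then have Q: "Q = F' * q + r" and "r = 0 \<or> degree r < N"
    using pseudo_divmod[OF _ qr] F' by auto
  then have deg: "degree (map_poly h r) < N"
    using \<open>0 < N\<close> degree_map_poly_le[of h r] by auto
  have "poly (map_poly h r) (x j) = c" if "j < N" for j
  proof -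
    have "poly ?F (x j) = 0"
      using that by (auto simp: poly_prod)
    then show ?thesis
      using at_roots[OF that] by (simp add: Q map_poly_hom.hom_add map_poly_hom.hom_mult F'(1))
  qed
  then have "map_poly h r = [:c:]"
    by (rule poly_eq_const_if_eq_on_points[OF deg \<open>inj_on x {..<N}\<close>])
  then have "c = h (coeff r 0)"
    by (metis coeff_map_poly_hom coeff_pCons_0)
  then show ?thesis by simp
qed

section \<open>Integer polynomials in countably many variables\<close>

type_synonym int_mpoly = "(nat \<Rightarrow>\<^sub>0 nat) \<Rightarrow>\<^sub>0 int"

definition eval_monomial :: "(nat \<Rightarrow> 'a::comm_ring_1) \<Rightarrow> (nat \<Rightarrow>\<^sub>0 nat) \<Rightarrow> 'a" where
  "eval_monomial \<rho> m = (\<Prod>i\<in>Poly_Mapping.keys m. \<rho> i ^ Poly_Mapping.lookup m i)"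

definition mpoly_eval :: "(nat \<Rightarrow> 'a::comm_ring_1) \<Rightarrow> int_mpoly \<Rightarrow> 'a" where
  "mpoly_eval \<rho> p = (\<Sum>m\<in>Poly_Mapping.keys p. of_int (Poly_Mapping.lookup p m) * eval_monomial \<rho> m)"

definition mpoly_var :: "nat \<Rightarrow> int_mpoly" where
  "mpoly_var i = Poly_Mapping.single (Poly_Mapping.single i 1) 1"

lemma eval_monomial_superset:
  "finite K \<Longrightarrow> Poly_Mapping.keys m \<subseteq> K \<Longrightarrow> eval_monomial \<rho> m = (\<Prod>i\<in>K. \<rho> i ^ Poly_Mapping.lookup m i)"
  unfolding eval_monomial_def
  by (rule prod.mono_neutral_left) (auto simp: not_in_keys_iff_lookup_eq_zero)

lemma eval_monomial_add: "eval_monomial \<rho> (a + b) = eval_monomial \<rho> a * eval_monomial \<rho> b"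
proof -
  let ?K = "Poly_Mapping.keys a \<union> Poly_Mapping.keys b"
  have "eval_monomial \<rho> (a + b) = (\<Prod>i\<in>?K. \<rho> i ^ Poly_Mapping.lookup (a + b) i)"
    by (rule eval_monomial_superset) (simp_all add: keys_add)
  also have "\<dots> = eval_monomial \<rho> a * eval_monomial \<rho> b"
    by (simp add: eval_monomial_superset[of ?K] lookup_add power_add prod.distrib)
  finally show ?thesis .
qed

lemma mpoly_eval_superset:
  "finite K \<Longrightarrow> Poly_Mapping.keys p \<subseteq> K \<Longrightarrow>
    mpoly_eval \<rho> p = (\<Sum>m\<in>K. of_int (Poly_Mapping.lookup p m) * eval_monomial \<rho> m)"
  unfolding mpoly_eval_def
  by (rule sum.mono_neutral_left) (auto simp: not_in_keys_iff_lookup_eq_zero)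

lemma mpoly_eval_add: "mpoly_eval \<rho> (p + q) = mpoly_eval \<rho> p + mpoly_eval \<rho> q"
proof -
  let ?K = "Poly_Mapping.keys p \<union> Poly_Mapping.keys q"
  have "mpoly_eval \<rho> (p + q) = (\<Sum>m\<in>?K. of_int (Poly_Mapping.lookup (p + q) m) * eval_monomial \<rho> m)"
    by (rule mpoly_eval_superset) (simp_all add: keys_add)
  also have "\<dots> = mpoly_eval \<rho> p + mpoly_eval \<rho> q"
    by (simp add: mpoly_eval_superset[of ?K] lookup_add sum.distrib distrib_right)
  finally show ?thesis .
qed

lemma eval_monomial_0 [simp]: "eval_monomial \<rho> 0 = 1"
  by (simp add: eval_monomial_def)

lemma mpoly_eval_single: "mpoly_eval \<rho> (Poly_Mapping.single m c) = of_int c * eval_monomial \<rho> m"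
  by (simp add: mpoly_eval_def)

lemma update_eq_add_single:
  "a \<notin> Poly_Mapping.keys f \<Longrightarrow> Poly_Mapping.update a b f = f + Poly_Mapping.single a b"
  by (rule poly_mapping_eqI)
    (auto simp: lookup_update lookup_add lookup_single when_def not_in_keys_iff_lookup_eq_zero)

lemma mpoly_eval_mult: "mpoly_eval \<rho> (p * q) = mpoly_eval \<rho> p * mpoly_eval \<rho> q"
proof (induction p rule: Poly_Mapping.update_induct)
  case (update f a b)
  have single_mult:
    "mpoly_eval \<rho> (Poly_Mapping.single a b * q) = of_int b * eval_monomial \<rho> a * mpoly_eval \<rho> q"
  proof (induction q rule: Poly_Mapping.update_induct)
    case (update g c d)
    then show ?case
      by (simp add: update_eq_add_single distrib_left mpoly_eval_add mult_single mpoly_eval_single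
          eval_monomial_add algebra_simps)
  qed (simp add: mpoly_eval_def)
  show ?case
    by (simp only: update_eq_add_single[OF update(1)] distrib_right mpoly_eval_add single_mult
        mpoly_eval_single update(3))
qed (simp add: mpoly_eval_def)

lemma mpoly_eval_0: "mpoly_eval \<rho> 0 = 0"
  by (simp add: mpoly_eval_def)

lemma mpoly_eval_1: "mpoly_eval \<rho> 1 = 1"
  by (simp add: mpoly_eval_def)

interpretation mpoly_eval: comm_ring_hom "mpoly_eval \<rho>" for \<rho>
  by unfold_locales (simp_all add: mpoly_eval_add mpoly_eval_mult mpoly_eval_0 mpoly_eval_1)

lemma mpoly_eval_var [simp]: "mpoly_eval \<rho> (mpoly_var i) = \<rho> i"
  by (simp add: mpoly_var_def mpoly_eval_single eval_monomial_def)

lemma inj_mpoly_var: "inj mpoly_var"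
proof (rule injI)
  fix i j
  assume "mpoly_var i = mpoly_var j"
  then have "mpoly_eval (\<lambda>l. of_bool (l = i)) (mpoly_var i)
      = (mpoly_eval (\<lambda>l. of_bool (l = i)) (mpoly_var j) :: int)"
    by simp
  then show "i = j" by simp
qed

lemma (in comm_ring_hom) hom_mpoly_eval: "hom (mpoly_eval \<rho> p) = mpoly_eval (hom \<circ> \<rho>) p"
  by (simp add: mpoly_eval_def eval_monomial_def hom_sum hom_mult hom_prod hom_power hom_of_int)

lemma (in comm_ring_hom) hom_comp_mpoly_eval: "hom \<circ> mpoly_eval \<rho> = mpoly_eval (hom \<circ> \<rho>)"
  by (rule ext) (simp add: hom_mpoly_eval)

section \<open>Universal polynomials for products over k-subsets\<close>

definition esym_coeff :: "nat \<Rightarrow> nat \<Rightarrow> int_mpoly" where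
  "esym_coeff n i = coeff (recip_poly {..<n} mpoly_var) i"

lemma map_poly_universal:
  assumes P: "map_poly (mpoly_eval (esym_coeff n)) P = ksubset_recip_poly {..<n} k mpoly_var"
    and A: "finite A" "card A = n"
  shows "map_poly (mpoly_eval (coeff (recip_poly A u))) P = ksubset_recip_poly A k u"
proof -
  obtain h where h: "bij_betw h {..<n} A"
    using ex_bij_betw_nat_finite[OF A(1)] A(2) by (auto simp: lessThan_atLeast0)
  let ?\<epsilon> = "mpoly_eval (u \<circ> h)"
  have "?\<epsilon> \<circ> esym_coeff n = coeff (map_poly ?\<epsilon> (recip_poly {..<n} mpoly_var))"
    by (auto simp: esym_coeff_def)
  also have "map_poly ?\<epsilon> (recip_poly {..<n} mpoly_var) = recip_poly A u"
    by (simp add: mpoly_eval.map_poly_recip_poly recip_poly_reindex[OF h] comp_def)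
  finally have "map_poly ?\<epsilon> (map_poly (mpoly_eval (esym_coeff n)) P)
      = map_poly (mpoly_eval (coeff (recip_poly A u))) P"
    by (simp add: map_poly_map_poly comp_def mpoly_eval.hom_mpoly_eval)
  moreover have "map_poly ?\<epsilon> (ksubset_recip_poly {..<n} k mpoly_var) = ksubset_recip_poly A k u"
    by (simp add: mpoly_eval.map_poly_ksubset_recip_poly ksubset_recip_poly_reindex[OF h] comp_def)
  ultimately show ?thesis
    using P by simp
qed

lemma coeff_from_times_linear:
  fixes g :: "'a::comm_ring_1 poly"
  shows "coeff g i = (\<Sum>l\<le>i. coeff (g * [:1, - t:]) l * t ^ (i - l))"
proof (induction i)
  case (Suc i)
  have "coeff (g * [:1, - t:]) (Suc i) = coeff g (Suc i) - t * coeff g i"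
    by (simp add: mult.commute[of g] mult_pCons_left)
  then have "coeff g (Suc i) = coeff (g * [:1, - t:]) (Suc i) + t * coeff g i"
    by simp
  also have "\<dots> = coeff (g * [:1, - t:]) (Suc i)
      + (\<Sum>l\<le>i. coeff (g * [:1, - t:]) l * t ^ (Suc i - l))"
    unfolding Suc sum_distrib_left
    by (intro arg_cong2[where f="(+)"] refl sum.cong) (auto simp: Suc_diff_le algebra_simps)
  finally show ?case
    by (simp add: sum.atMost_Suc)
qed (simp add: coeff_mult)

lemma ksubset_recip_poly_insert_universal:
  fixes u :: "nat \<Rightarrow> 'a::comm_ring_1"
  assumes "a \<notin> A" "finite A" "card A = n"
    and P1: "map_poly (mpoly_eval (esym_coeff n)) P1 = ksubset_recip_poly {..<n} (Suc k) mpoly_var"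
    and P2: "map_poly (mpoly_eval (esym_coeff n)) P2 = ksubset_recip_poly {..<n} k mpoly_var"
  defines "c \<equiv> \<lambda>i. \<Sum>l\<le>i. coeff (recip_poly (insert a A) u) l * u a ^ (i - l)"
  shows "ksubset_recip_poly (insert a A) (Suc k) u
       = map_poly (mpoly_eval c) P1 * (map_poly (mpoly_eval c) P2 \<circ>\<^sub>p [:0, u a:])"
proof -
  have "recip_poly (insert a A) u = recip_poly A u * [:1, - u a:]"
    using assms(1,2) by (simp add: recip_poly_def mult.commute)
  then have "c = coeff (recip_poly A u)"
    unfolding c_def by (simp only:) (intro ext, rule coeff_from_times_linear[symmetric])
  then show ?thesis
    using assms(1-3)
    by (simp add: ksubset_recip_poly_insert map_poly_universal[OF P1] map_poly_universal[OF P2])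
qed

lemma (in comm_semiring_hom) ex_map_poly_preimage:
  assumes "\<And>i. coeff q i \<in> range hom"
  shows "\<exists>p. map_poly hom p = q"
  using assms
proof (induction q)
  case (pCons a q)
  obtain b where "hom b = a"
    using pCons.prems[of 0] by auto
  moreover obtain p where "map_poly hom p = q"
    using pCons.IH pCons.prems[of "Suc _"] by auto
  ultimately have "map_poly hom (pCons b p) = pCons a q"
    by (simp add: map_poly_pCons_hom)
  then show ?case ..
qed (auto intro: exI[of _ 0])

text \<open>Coefficient i of F / (1 - T z) as a polynomial in T, the variable X_l standing for the
  l-th coefficient of F (cf. coeff_from_times_linear).\<close>

definition lin_quot_coeff :: "nat \<Rightarrow> int_mpoly poly" where
  "lin_quot_coeff i = (\<Sum>l\<le>i. [:mpoly_var l:] * [:0, 1:] ^ (i - l))"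

text \<open>With an extra variable T, the polynomial below specialises at T = X_j to the factorisation of
  the k-subset polynomial obtained by singling out the variable X_j.\<close>

lemma eval_universal_insert:
  assumes P1: "map_poly (mpoly_eval (esym_coeff n)) P1 = ksubset_recip_poly {..<n} (Suc k) mpoly_var"
      and P2: "map_poly (mpoly_eval (esym_coeff n)) P2 = ksubset_recip_poly {..<n} k mpoly_var"
      and "j < Suc n"
  defines "\<epsilon> \<equiv> (\<lambda>q. poly q (mpoly_var j)) \<circ> map_poly (mpoly_eval (esym_coeff (Suc n)))"
  shows "map_poly \<epsilon> (map_poly (mpoly_eval lin_quot_coeff) P1
                     * (map_poly (mpoly_eval lin_quot_coeff) P2 \<circ>\<^sub>p [:0, [:0, 1:]:]))
       = ksubset_recip_poly {..<Suc n} (Suc k) mpoly_var"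
proof -
  interpret \<epsilon>: comm_ring_hom \<epsilon>
    unfolding \<epsilon>_def
    by (intro comm_ring_hom_comp mpoly_eval.comm_ring_hom_map_poly poly_hom.comm_ring_hom_axioms)
  interpret map_poly_\<epsilon>: map_poly_comm_ring_hom \<epsilon> ..
  define A where "A = {..<Suc n} - {j}"
  have A: "j \<notin> A" "finite A" "card A = n" "insert j A = {..<Suc n}"
    using \<open>j < Suc n\<close> by (auto simp: A_def)
  have \<epsilon>_T: "\<epsilon> [:0, 1:] = mpoly_var j"
    by (simp add: \<epsilon>_def)
  have \<epsilon>_const: "\<epsilon> [:c:] = mpoly_eval (esym_coeff (Suc n)) c" for c
    by (simp add: \<epsilon>_def mpoly_eval.map_poly_pCons_hom)
  define c where
    "c = (\<lambda>i. \<Sum>l\<le>i. coeff (recip_poly {..<Suc n} mpoly_var) l * mpoly_var j ^ (i - l))"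
  have "\<epsilon> (lin_quot_coeff i) = c i" for i
    unfolding lin_quot_coeff_def \<epsilon>.hom_sum \<epsilon>.hom_mult \<epsilon>.hom_power \<epsilon>_const \<epsilon>_T
    by (simp add: esym_coeff_def c_def)
  then have "\<epsilon> \<circ> lin_quot_coeff = c"
    by auto
  then show ?thesis
    using ksubset_recip_poly_insert_universal[OF A(1-3) P1 P2, of mpoly_var, unfolded A(4)]
    by (simp add: map_poly_\<epsilon>.hom_mult \<epsilon>.map_poly_pcompose map_poly_map_poly \<epsilon>.hom_comp_mpoly_eval
        \<epsilon>_T[simplified] c_def)
qed

lemma ex_universal_ksubset_recip_poly_0:
  "\<exists>P. map_poly (mpoly_eval (esym_coeff n)) P = ksubset_recip_poly {..<n} 0 mpoly_var"
  by (intro exI[of _ "[:1, -1:]"])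
    (simp add: ksubset_recip_poly_0 mpoly_eval.map_poly_pCons_hom mpoly_eval.hom_uminus)

lemma ex_universal_ksubset_recip_poly:
  "\<exists>P. map_poly (mpoly_eval (esym_coeff n)) P = ksubset_recip_poly {..<n} k mpoly_var"
proof (induction n arbitrary: k)
  case 0
  show ?case
    using ex_universal_ksubset_recip_poly_0[of 0]
    by (cases k) (auto simp: ksubset_recip_poly_empty_Suc intro: exI[of _ 1])
next
  case (Suc n)
  show ?case
  proof (cases k)
    case (Suc k')
    obtain P1 P2
      where P1: "map_poly (mpoly_eval (esym_coeff n)) P1
                   = ksubset_recip_poly {..<n} (Suc k') mpoly_var"
        and P2: "map_poly (mpoly_eval (esym_coeff n)) P2 = ksubset_recip_poly {..<n} k' mpoly_var"
      using Suc.IH by metis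
    let ?h = "mpoly_eval (esym_coeff (Suc n))"
    let ?\<Psi> = "map_poly (mpoly_eval lin_quot_coeff) P1
                 * (map_poly (mpoly_eval lin_quot_coeff) P2 \<circ>\<^sub>p [:0, [:0, 1:]:])"
    let ?G = "ksubset_recip_poly {..<Suc n} (Suc k') mpoly_var"
    have "(\<Prod>j<Suc n. [:- mpoly_var j, 1:]) = rev_poly (Suc n) (recip_poly {..<Suc n} mpoly_var)"
      by (metis card_lessThan finite_lessThan prod_monic_linear_eq_rev_poly recip_poly_def)
    then have "coeff (\<Prod>j<Suc n. [:- mpoly_var j, 1:]) l
        = (if l \<le> Suc n then ?h (mpoly_var (Suc n - l)) else ?h 0)" for l
      by (simp add: coeff_rev_poly esym_coeff_def mpoly_eval_0)
    then have roots_coeffs: "coeff (\<Prod>j<Suc n. [:- mpoly_var j, 1:]) l \<in> range ?h" for l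
      by (metis rangeI)
    have "coeff ?G i \<in> range ?h" for i
    proof (rule value_in_range_comm_ring_hom[OF mpoly_eval.comm_ring_hom_axioms _ _ roots_coeffs])
      show "poly (map_poly ?h (coeff ?\<Psi> i)) (mpoly_var j) = coeff ?G i" if "j < Suc n" for j
        using arg_cong[OF eval_universal_insert[OF P1 P2 that], of "\<lambda>p. coeff p i"]
        by (simp add: coeff_map_poly)
    qed (auto intro: inj_on_subset[OF inj_mpoly_var])
    then show ?thesis
      using mpoly_eval.ex_map_poly_preimage \<open>k = Suc k'\<close> by metis
  qed (simp add: ex_universal_ksubset_recip_poly_0)
qed

section \<open>The exterior power polynomial\<close>

definition univ_ksubset_recip_poly :: "nat \<Rightarrow> nat \<Rightarrow> int_mpoly poly" where
  "univ_ksubset_recip_poly n k =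
     (SOME P. map_poly (mpoly_eval (esym_coeff n)) P = ksubset_recip_poly {..<n} k mpoly_var)"

text \<open>For F = prod (1 - u_j z) over j in A with card A = n, exterior_poly n k F is the product
  of (z - u_I) over the k-subsets I of A, i.e. the characteristic polynomial of the k-th exterior
  power.\<close>

definition exterior_poly :: "nat \<Rightarrow> nat \<Rightarrow> 'a::comm_ring_1 poly \<Rightarrow> 'a poly" where
  "exterior_poly n k F =
     rev_poly (n choose k) (map_poly (mpoly_eval (coeff F)) (univ_ksubset_recip_poly n k))"

lemma (in comm_ring_hom) map_poly_exterior_poly:
  "map_poly hom (exterior_poly n k F) = exterior_poly n k (map_poly hom F)"
proof -
  have "hom \<circ> coeff F = coeff (map_poly hom F)"
    by auto
  then show ?thesis
    by (simp add: exterior_poly_def map_poly_rev_poly map_poly_map_poly hom_comp_mpoly_eval)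
qed

lemma univ_ksubset_recip_poly:
  "map_poly (mpoly_eval (esym_coeff n)) (univ_ksubset_recip_poly n k)
     = ksubset_recip_poly {..<n} k mpoly_var"
  unfolding univ_ksubset_recip_poly_def by (rule someI_ex[OF ex_universal_ksubset_recip_poly])

lemma exterior_poly_recip_poly:
  fixes u :: "nat \<Rightarrow> 'a::idom"
  assumes "finite A"
  shows "exterior_poly (card A) k (recip_poly A u) = ksubset_poly A k u"
  by (simp add: exterior_poly_def map_poly_universal[OF univ_ksubset_recip_poly assms refl]
      ksubset_poly_eq_rev_poly[OF assms])

lemma exterior_poly_factor_one_minus_X:
  fixes v :: "nat \<Rightarrow> 'a::idom"
  assumes "a \<notin> A" "finite A"
  shows "exterior_poly (Suc (card A)) (Suc k) ([:1, -1:] * recip_poly A v)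
       = exterior_poly (card A) k (recip_poly A v)
         * exterior_poly (card A) (Suc k) (recip_poly A v)"
proof -
  let ?w = "v(a := 1)"
  have "recip_poly A ?w = recip_poly A v"
    unfolding recip_poly_def using assms(1) by (intro prod.cong) auto
  then have ins: "[:1, -1:] * recip_poly A v = recip_poly (insert a A) ?w"
    unfolding recip_poly_def prod.insert[OF assms(2,1)] by simp
  have card: "card (insert a A) = Suc (card A)"
    using assms by simp
  have "ksubset_poly (insert a A) (Suc k) ?w = ksubset_poly A (Suc k) ?w * ksubset_poly A k ?w"
    by (rule ksubset_poly_insert_one[OF assms]) simp
  moreover have "ksubset_poly A j ?w = ksubset_poly A j v" for j
    using assms(1) by (intro ksubset_poly_cong) auto
  ultimately show ?thesis
    unfolding ins card[symmetric] exterior_poly_recip_poly[OF finite.insertI[OF assms(2)]]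
      exterior_poly_recip_poly[OF assms(2)]
    by (simp add: mult.commute)
qed

lemma prod_mset_list: "(\<Prod>x\<in>#mset xs. f x) = (\<Prod>i<length xs. f (xs ! i))"
  by (induction xs) (simp_all add: prod.lessThan_Suc_shift del: prod.lessThan_Suc)

lemma ex_recip_poly_factorization:
  fixes L :: "'a::alg_closed_field poly"
  assumes "degree L = m" "coeff L 0 = 1"
  shows "\<exists>u. L = recip_poly {1..m} u"
proof -
  have "reflect_poly L \<noteq> 0" "degree (reflect_poly L) = m"
    using assms by auto
  moreover have "lead_coeff (reflect_poly L) = 1"
    using coeff_0_reflect_poly[of "reflect_poly L"] reflect_poly_reflect_poly[of L] assms(2) by simp
  ultimately obtain A where "size A = m" "reflect_poly L = (\<Prod>x\<in>#A. [:- x, 1:])"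
    using alg_closed_imp_factorization by (metis smult_1_left)
  moreover obtain xs where "mset xs = A"
    using ex_mset by blast
  ultimately have "reflect_poly L = (\<Prod>j\<in>{1..m}. [:- xs ! (j - 1), 1:])"
    by (auto simp: prod_mset_list prod.atLeast1_atMost_eq)
  then have "L = reflect_poly (\<Prod>j\<in>{1..m}. [:- xs ! (j - 1), 1:])"
    by (metis assms(2) one_neq_zero reflect_poly_reflect_poly)
  also have "\<dots> = recip_poly {1..m} (\<lambda>j. xs ! (j - 1))"
    by (simp add: recip_poly_def reflect_poly_prod reflect_poly_monic_linear[simplified])
  finally show ?thesis
    by blast
qed

section \<open>Specialising the trinomial\<close>

lemma (in comm_ring_hom) map_poly_one_minus_X: "map_poly hom [:1, -1:] = [:1, -1:]"
  by (simp add: map_poly_pCons_hom hom_uminus)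

lemma one_minus_X_factor:
  fixes x :: "'a::comm_ring_1"
  assumes "1 \<le> m"
  shows "[:1:] - [:0, 1 + x:] + monom x m = [:1, -1:] * ([:1:] - (\<Sum>i=1..<m. monom x i))"
proof -
  have "[:1, -1:] * monom x i = monom x i - monom x (Suc i)" for i
    by (simp add: mult_pCons_left monom_Suc)
  then have "[:1, -1:] * ([:1:] - (\<Sum>i=1..<m. monom x i))
      = [:1, -1:] - (\<Sum>i=1..<m. monom x i - monom x (Suc i))"
    by (simp add: right_diff_distrib sum_distrib_left)
  also have "\<dots> = [:1, -1:] + (\<Sum>i=1..<m. monom x (Suc i) - monom x i)"
    by (simp add: sum_subtractf)
  also have "\<dots> = [:1, -1:] + (monom x m - monom x 1)"
    using assms by (simp only: sum_Suc_diff')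
  also have "\<dots> = [:1:] - [:0, 1 + x:] + monom x m"
    by (simp add: monom_Suc monom_0 algebra_simps)
      (rule poly_eqI, simp add: coeff_pCons split: nat.split)
  finally show ?thesis
    by simp
qed

interpretation embx_hom: inj_comm_ring_hom embx
  by unfold_locales
    (simp_all add: embx_def to_ac_add[symmetric] to_ac_mult[symmetric] eq_fract
      One_fract_def Zero_fract_def)

interpretation embxs_hom: inj_comm_ring_hom embxs
  by unfold_locales
    (simp_all add: embxs_def to_ac_add[symmetric] to_ac_mult[symmetric] eq_fract
      One_fract_def Zero_fract_def)

interpretation embx_poly: map_poly_inj_comm_ring_hom embx ..

interpretation embxs_poly: map_poly_inj_comm_ring_hom embxs ..

interpretation subst_xs_hom: comm_ring_hom subst_xs
  unfolding subst_xs_def by (rule poly_hom.comm_ring_hom_axioms)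

interpretation subst_xs_poly: map_poly_comm_ring_hom subst_xs ..

lemma c_poly_eq_exterior_poly:
  assumes "2 \<le> m"
  shows "c_poly m k = exterior_poly m k ([:1:] - [:0, [:0, 1:]:] + monom [:[:0, 1:]:] m)"
proof -
  let ?F = "[:1:] - [:0, [:0, 1:]:] + monom [:[:0, 1:]:] m :: int poly poly poly"
  let ?L = "[:1:] - [:0, embxs [:0, 1:]:] + monom (embxs [:[:0, 1:]:]) m"
  have L: "map_poly embxs ?F = ?L"
    by (simp add: embxs_poly.hom_add embxs_poly.hom_minus embxs_hom.map_poly_pCons_hom)
  have char: "map_poly embxs (exterior_poly m k ?F) = ksubset_poly {1..m} k u"
    if "?L = recip_poly {1..m} u" for u
    using exterior_poly_recip_poly[of "{1..m}" k u]
    unfolding embxs_hom.map_poly_exterior_poly L that by simp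
  have "degree ([:1:] - [:0, embxs [:0, 1:]:]) \<le> 1"
    using degree_diff_le_max[of "[:1:]" "[:0, embxs [:0, 1:]:]"] by auto
  then have "degree ([:1:] - [:0, embxs [:0, 1:]:]) < degree (monom (embxs [:[:0, 1:]:]) m)"
    using assms by (simp add: degree_monom_eq)
  then have "degree ?L = m"
    by (subst degree_add_eq_right) (simp_all add: degree_monom_eq)
  moreover have "coeff ?L 0 = 1"
    using assms by simp
  ultimately obtain u where u: "?L = recip_poly {1..m} u"
    using ex_recip_poly_factorization by blast
  show ?thesis
    unfolding c_poly_def
  proof (rule the_equality)
    fix P
    assume "\<forall>u. ?L = (\<Prod>j\<in>{1..m}. [:1, - u j:]) \<longrightarrow>
      map_poly embxs P = (\<Prod>I\<in>ksubsets {1..m} k. [:- (\<Prod>i\<in>I. u i), 1:])"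
    then have "map_poly embxs P = ksubset_poly {1..m} k u"
      using u unfolding recip_poly_def ksubset_poly_def by blast
    then show "P = exterior_poly m k ?F"
      using char[OF u] embxs_poly.eq_iff by metis
  qed (use char in \<open>simp add: recip_poly_def ksubset_poly_def\<close>)
qed

definition tail_poly :: "nat \<Rightarrow> int poly poly" where
  "tail_poly m = [:1:] - (\<Sum>i=1..<m. monom [:0, 1:] i)"

lemma tail_poly_factor:
  assumes "1 \<le> m"
  shows "[:1:] - [:0, [:1, 1:]:] + monom [:0, 1:] m = [:1, -1:] * tail_poly m"
proof -
  have "[:1, 1:] = 1 + ([:0, 1:] :: int poly)"
    by (rule poly_eqI) (simp add: coeff_pCons split: nat.split)
  then show ?thesis
    using one_minus_X_factor[OF assms, of "[:0, 1:] :: int poly"] by (simp add: tail_poly_def)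
qed

lemma map_poly_subst_xs_trinomial:
  "map_poly subst_xs ([:1:] - [:0, [:0, 1:]:] + monom [:[:0, 1:]:] m)
     = [:1:] - [:0, [:1, 1:]:] + monom [:0, 1:] m"
  by (simp add: subst_xs_poly.hom_add subst_xs_poly.hom_minus subst_xs_hom.map_poly_pCons_hom
      subst_xs_def)

lemma map_poly_embx_tail_poly:
  assumes "2 \<le> m"
    and "[:1:] - [:0, embx [:1, 1:]:] + monom (embx [:0, 1:]) m
           = [:1, -1:] * (\<Prod>j\<in>{2..m}. [:1, - v j:])"
  shows "map_poly embx (tail_poly m) = recip_poly {2..m} v"
proof -
  have "[:1, -1:] * map_poly embx (tail_poly m)
      = map_poly embx ([:1:] - [:0, [:1, 1:]:] + monom [:0, 1:] m)"
    using assms(1) by (simp only: tail_poly_factor embx_poly.hom_mult embx_hom.map_poly_one_minus_X)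
  also have "\<dots> = [:1:] - [:0, embx [:1, 1:]:] + monom (embx [:0, 1:]) m"
    by (simp add: embx_poly.hom_add embx_poly.hom_minus embx_hom.map_poly_pCons_hom)
  also have "\<dots> = [:1, -1:] * recip_poly {2..m} v"
    unfolding recip_poly_def by (rule assms(2))
  finally show ?thesis
    by (subst (asm) mult_left_cancel) simp_all
qed

theorem mainTheorem1:
  fixes m k :: nat and v :: "nat \<Rightarrow> Kx"
  assumes "m \<ge> 2" and "1 \<le> k" and "k \<le> m - 1"
    and "[:1:] - [:0, embx [:1, 1:]:] + monom (embx [:0, 1:]) m
           = [:1, -1:] * (\<Prod>j\<in>{2..m}. [:1, - v j:])"
  shows "\<exists>W0 W1 :: int poly poly.
           map_poly embx W0 = (\<Prod>I\<in>ksubsets {2..m} (k - 1). [:- (\<Prod>i\<in>I. v i), 1:])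
         \<and> map_poly embx W1 = (\<Prod>I\<in>ksubsets {2..m} k. [:- (\<Prod>i\<in>I. v i), 1:])
         \<and> map_poly subst_xs (c_poly m k) = W0 * W1"
proof -
  obtain k' where k': "k = Suc k'"
    using assms(2) by (cases k) auto
  have m: "m = Suc (card {2..m})" and card: "card {2..m} = m - 1" and "1 \<le> m"
    using assms(1) by auto
  have ext: "exterior_poly (card {2..m}) j (recip_poly {2..m} v) = ksubset_poly {2..m} j v" for j
    by (rule exterior_poly_recip_poly) simp
  let ?W0 = "exterior_poly (m - 1) (k - 1) (tail_poly m)"
    and ?W1 = "exterior_poly (m - 1) k (tail_poly m)"
  have W: "map_poly embx (exterior_poly (m - 1) j (tail_poly m)) = ksubset_poly {2..m} j v" for j
    unfolding embx_hom.map_poly_exterior_poly map_poly_embx_tail_poly[OF assms(1,4)] card[symmetric]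
    by (rule ext)
  have "map_poly embx (map_poly subst_xs (c_poly m k))
      = exterior_poly m k ([:1, -1:] * recip_poly {2..m} v)"
    by (simp only: c_poly_eq_exterior_poly[OF assms(1)] subst_xs_hom.map_poly_exterior_poly
        map_poly_subst_xs_trinomial tail_poly_factor[OF \<open>1 \<le> m\<close>] embx_hom.map_poly_exterior_poly
        embx_poly.hom_mult embx_hom.map_poly_one_minus_X map_poly_embx_tail_poly[OF assms(1,4)])
  also have "\<dots> = ksubset_poly {2..m} (k - 1) v * ksubset_poly {2..m} k v"
    using exterior_poly_factor_one_minus_X[of 1 "{2..m}", OF _ finite_atLeastAtMost,
        where v = v and k = k', folded m]
    by (simp only: k' diff_Suc_1 ext atLeastAtMost_iff) simp
  also have "\<dots> = map_poly embx (?W0 * ?W1)"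
    by (simp only: embx_poly.hom_mult W)
  finally have "map_poly subst_xs (c_poly m k) = ?W0 * ?W1"
    by (simp only: embx_poly.eq_iff)
  then show ?thesis
    using W unfolding ksubset_poly_def by blast
qed

end
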